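(* Let $\mathcal E$ be an eventual identity on an $F$-manifold $(M,\circ,e)$. Then for all integers $m,n\in\mathbb Z$, $$[\mathcal E^n,\mathcal E^m]=(m-n)\,\mathcal E^{m+n-1}\circ[e,\mathcal E].$$
   Context: An $F$-manifold $(M,\circ,e)$ is a smooth manifold $M$ together with a commutative, associative, $C^\infty(M)$-bilinear multiplication $\circ$ on $TM$ with unit vector field $e$, such that $$L_{X\circ Y}(\circ)=X\circ L_Y(\circ)+Y\circ L_X(\circ)$$ for all vector fields $X,Y$. Here $$L_Z(\circ)(X,Y):=[Z,X\circ Y]-[Z,X]\circ Y-X\circ[Z,Y].$$ A vector field $\mathcal E$ is invertible if there is a vector field $\mathcal E^{-1}$ with $\mathcal E\circ\mathcal E^{-1}=e$ everywhere on $M$. An eventual identity on $(M,\circ,e)$ is an invertible vector field $\mathcal E$ such that the multiplication $X*Y:=X\circ Y\circ\mathcal E^{-1}$ defines an $F$-manifold structure on $M$ (its unit is $\mathcal E$). Powers are taken with respect to $\circ$: $\mathcal E^0=e$, $\mathcal E^{n}=\mathcal E\circ\cdots\circ\mathcal E$ ($n$ factors) for $n>0$, and $\mathcal E^{-n}=(\mathcal E^{-1})^n$. *)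

theory Defs
  imports "HOL-Analysis.Analysis"
begin

primrec Ck :: "nat \<Rightarrow> (real^'n) set \<Rightarrow> (real^'n \<Rightarrow> real) set" where
  "Ck 0 S = {f. continuous_on S f}"
| "Ck (Suc k) S = {f. f differentiable_on S \<and>
      (\<forall>i. (\<lambda>x. frechet_derivative f (at x) (axis i 1)) \<in> Ck k S)}"

definition smooth_on :: "(real^'n) set \<Rightarrow> (real^'n \<Rightarrow> real) \<Rightarrow> bool" where
  "smooth_on S f \<longleftrightarrow> (\<forall>k. f \<in> Ck k S)"

definition smooth_map_on :: "(real^'n) set \<Rightarrow> (real^'n \<Rightarrow> real^'m) \<Rightarrow> bool" where
  "smooth_map_on S g \<longleftrightarrow> (\<forall>j. smooth_on S (\<lambda>x. g x $ j))"

definition smooth_atlas :: "('a::topological_space set \<times> ('a \<Rightarrow> real^'n)) set \<Rightarrow> bool" where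
  "smooth_atlas A \<longleftrightarrow>
     \<Union>(fst ` A) = UNIV \<and>
     (\<forall>(U,\<phi>)\<in>A. open U \<and> open (\<phi> ` U) \<and> inj_on \<phi> U \<and> continuous_on U \<phi> \<and>
                  continuous_on (\<phi> ` U) (inv_into U \<phi>)) \<and>
     (\<forall>(U,\<phi>)\<in>A. \<forall>(V,\<psi>)\<in>A. smooth_map_on (\<phi> ` (U \<inter> V)) (\<psi> \<circ> inv_into U \<phi>))"

definition Cinf :: "('a set \<times> ('a \<Rightarrow> real^'n)) set \<Rightarrow> ('a \<Rightarrow> real) set" where
  "Cinf A = {f. \<forall>(U,\<phi>)\<in>A. smooth_on (\<phi> ` U) (f \<circ> inv_into U \<phi>)}"

type_synonym 'a vf = "('a \<Rightarrow> real) \<Rightarrow> ('a \<Rightarrow> real)"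

text \<open>A vector field is a derivation of the algebra of smooth functions; as a canonical
  representative it sends non-smooth functions to 0.\<close>
definition vector_fields :: "('a set \<times> ('a \<Rightarrow> real^'n)) set \<Rightarrow> 'a vf set" where
  "vector_fields A = {X.
     (\<forall>f. f \<notin> Cinf A \<longrightarrow> X f = (\<lambda>_. 0)) \<and>
     (\<forall>f\<in>Cinf A. X f \<in> Cinf A) \<and>
     (\<forall>c. \<forall>f\<in>Cinf A. X (\<lambda>p. c * f p) = (\<lambda>p. c * X f p)) \<and>
     (\<forall>f\<in>Cinf A. \<forall>g\<in>Cinf A. X (\<lambda>p. f p + g p) = (\<lambda>p. X f p + X g p)) \<and>
     (\<forall>f\<in>Cinf A. \<forall>g\<in>Cinf A. X (\<lambda>p. f p * g p) = (\<lambda>p. f p * X g p + g p * X f p))}"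

definition vf_add :: "'a vf \<Rightarrow> 'a vf \<Rightarrow> 'a vf" where
  "vf_add X Y = (\<lambda>f p. X f p + Y f p)"

definition vf_diff :: "'a vf \<Rightarrow> 'a vf \<Rightarrow> 'a vf" where
  "vf_diff X Y = (\<lambda>f p. X f p - Y f p)"

definition vf_fscale :: "('a \<Rightarrow> real) \<Rightarrow> 'a vf \<Rightarrow> 'a vf" where
  "vf_fscale g X = (\<lambda>f p. g p * X f p)"

definition vf_rscale :: "real \<Rightarrow> 'a vf \<Rightarrow> 'a vf" where
  "vf_rscale c X = (\<lambda>f p. c * X f p)"

definition vf_bracket :: "'a vf \<Rightarrow> 'a vf \<Rightarrow> 'a vf" where
  "vf_bracket X Y = (\<lambda>f p. X (Y f) p - Y (X f) p)"

definition lie_mult :: "('a vf \<Rightarrow> 'a vf \<Rightarrow> 'a vf) \<Rightarrow> 'a vf \<Rightarrow> 'a vf \<Rightarrow> 'a vf \<Rightarrow> 'a vf" where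
  "lie_mult mul Z X Y =
     vf_diff (vf_diff (vf_bracket Z (mul X Y)) (mul (vf_bracket Z X) Y)) (mul X (vf_bracket Z Y))"

definition F_manifold ::
  "('a::topological_space set \<times> ('a \<Rightarrow> real^'n)) set \<Rightarrow> ('a vf \<Rightarrow> 'a vf \<Rightarrow> 'a vf) \<Rightarrow> 'a vf \<Rightarrow> bool" where
  "F_manifold A mul e \<longleftrightarrow>
     smooth_atlas A \<and>
     (\<forall>X\<in>vector_fields A. \<forall>Y\<in>vector_fields A. mul X Y \<in> vector_fields A) \<and>
     (\<forall>X\<in>vector_fields A. \<forall>Y\<in>vector_fields A. mul X Y = mul Y X) \<and>
     (\<forall>X\<in>vector_fields A. \<forall>Y\<in>vector_fields A. \<forall>Z\<in>vector_fields A.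
        mul (mul X Y) Z = mul X (mul Y Z)) \<and>
     (\<forall>X\<in>vector_fields A. \<forall>Y\<in>vector_fields A. \<forall>Z\<in>vector_fields A.
        mul (vf_add X Y) Z = vf_add (mul X Z) (mul Y Z)) \<and>
     (\<forall>g\<in>Cinf A. \<forall>X\<in>vector_fields A. \<forall>Y\<in>vector_fields A.
        mul (vf_fscale g X) Y = vf_fscale g (mul X Y)) \<and>
     e \<in> vector_fields A \<and>
     (\<forall>X\<in>vector_fields A. mul e X = X) \<and>
     (\<forall>X\<in>vector_fields A. \<forall>Y\<in>vector_fields A. \<forall>Z\<in>vector_fields A. \<forall>W\<in>vector_fields A.
        lie_mult mul (mul X Y) Z W =
          vf_add (mul X (lie_mult mul Y Z W)) (mul Y (lie_mult mul X Z W)))"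

definition vf_invertible ::
  "('a set \<times> ('a \<Rightarrow> real^'n)) set \<Rightarrow> ('a vf \<Rightarrow> 'a vf \<Rightarrow> 'a vf) \<Rightarrow> 'a vf \<Rightarrow> 'a vf \<Rightarrow> bool" where
  "vf_invertible A mul e E \<longleftrightarrow> E \<in> vector_fields A \<and> (\<exists>F\<in>vector_fields A. mul E F = e)"

definition vf_inverse ::
  "('a set \<times> ('a \<Rightarrow> real^'n)) set \<Rightarrow> ('a vf \<Rightarrow> 'a vf \<Rightarrow> 'a vf) \<Rightarrow> 'a vf \<Rightarrow> 'a vf \<Rightarrow> 'a vf" where
  "vf_inverse A mul e E = (SOME F. F \<in> vector_fields A \<and> mul E F = e)"

definition eventual_identity ::
  "('a::topological_space set \<times> ('a \<Rightarrow> real^'n)) set \<Rightarrow> ('a vf \<Rightarrow> 'a vf \<Rightarrow> 'a vf) \<Rightarrow> 'a vf \<Rightarrow> 'a vf \<Rightarrow> bool" where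
  "eventual_identity A mul e E \<longleftrightarrow>
     vf_invertible A mul e E \<and>
     F_manifold A (\<lambda>X Y. mul (mul X Y) (vf_inverse A mul e E)) E"

definition vf_ipow ::
  "('a set \<times> ('a \<Rightarrow> real^'n)) set \<Rightarrow> ('a vf \<Rightarrow> 'a vf \<Rightarrow> 'a vf) \<Rightarrow> 'a vf \<Rightarrow> 'a vf \<Rightarrow> int \<Rightarrow> 'a vf" where
  "vf_ipow A mul e E k =
     (if 0 \<le> k then (mul E ^^ nat k) e
      else (mul (vf_inverse A mul e E) ^^ nat (- k)) e)"

end

theory Submission
  imports Defs
begin

(*
  Let E be an eventual identity on an F-manifold (M, o, e) and write G = [e, E].
  The proof of  [E^n, E^m] = (m - n) E^(m+n-1) o G  rests on two facts about Lie derivatives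
  L_Z(o)(X, Y) = [Z, X o Y] - [Z, X] o Y - X o [Z, Y]:

   (1) L_e(o) = 0 and, dually, L_E = 0 for the twisted product X * Y = X o Y o E^-1 (the
       unit of any F-manifold is parallel); unwinding the latter gives L_E(o)(X, Y) = G o X o Y;
   (2) by the F-manifold identity L_{XoY} = X o L_Y + Y o L_X, this propagates to
       L_{E^k}(o)(X, Y) = k E^(k-1) o G o X o Y for every integer k.

  The bracket [Z, E^m] then satisfies the linear recursion given by the product rule
  [Z, E o E^m] = L_Z(E, E^m) + [Z, E] o E^m + E o [Z, E^m]; solving it for Z = e, Z = E and
  finally Z = E^n yields the theorem. All inductions over the integers are instances of one
  principle: a sequence with D(k+1) = E o D(k) and D(0) = 0 vanishes, as E is invertible.
*)

section \<open>Smooth functions form an algebra\<close>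

lemma Ck_Suc_has_derivative:
  assumes "open S" and "f \<in> Ck (Suc k) S" and "x \<in> S"
  shows "(f has_derivative frechet_derivative f (at x)) (at x)"
  using assms by (simp add: differentiable_on_eq_differentiable_at frechet_derivative_works)

lemma Ck_cong:
  assumes "open S" and "f \<in> Ck k S" and "\<And>x. x \<in> S \<Longrightarrow> g x = f x"
  shows "g \<in> Ck k S"
  using assms(2,3)
proof (induction k arbitrary: f g)
  case 0
  then show ?case using continuous_on_cong[of S S g f] by simp
next
  case (Suc k)
  have g_deriv: "(g has_derivative frechet_derivative f (at x)) (at x)" if "x \<in> S" for x
    using has_derivative_transform_within_open[OF Ck_Suc_has_derivative[OF assms(1) Suc.prems(1) that]
        assms(1) that] Suc.prems(2) by simp
  then have "g differentiable_on S"
    using assms(1) by (auto simp: differentiable_on_eq_differentiable_at differentiable_def)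
  moreover have "(\<lambda>x. frechet_derivative g (at x) (axis i 1)) \<in> Ck k S" for i
    using Suc.IH[of "\<lambda>x. frechet_derivative f (at x) (axis i 1)"] Suc.prems(1)
      frechet_derivative_at[OF g_deriv] by simp
  ultimately show ?case by simp
qed

lemma Ck_const: "(\<lambda>_. c) \<in> Ck k S"
proof (induction k arbitrary: c)
  case (Suc k)
  have "frechet_derivative (\<lambda>_. c) (at x) = (\<lambda>_. 0)" for x :: "real^'n"
    using frechet_derivative_at[OF has_derivative_const[of c "at x"]] by simp
  then show ?case using Suc by simp
qed simp

lemma Ck_Suc_imp_Ck: "f \<in> Ck (Suc k) S \<Longrightarrow> f \<in> Ck k S"
  by (induction k arbitrary: f) (simp_all add: differentiable_imp_continuous_on)

lemma Ck_add:
  assumes "open S" and "f \<in> Ck k S" and "g \<in> Ck k S"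
  shows "(\<lambda>x. f x + g x) \<in> Ck k S"
  using assms(2,3)
proof (induction k arbitrary: f g)
  case 0
  then show ?case by (simp add: continuous_on_add)
next
  case (Suc k)
  have "frechet_derivative (\<lambda>x. f x + g x) (at x) =
          (\<lambda>h. frechet_derivative f (at x) h + frechet_derivative g (at x) h)" if "x \<in> S" for x
    using frechet_derivative_at[OF has_derivative_add[OF
          Ck_Suc_has_derivative[OF assms(1) Suc.prems(1) that]
          Ck_Suc_has_derivative[OF assms(1) Suc.prems(2) that]]] by simp
  then have "(\<lambda>x. frechet_derivative (\<lambda>x. f x + g x) (at x) (axis i 1)) \<in> Ck k S" for i
    using Ck_cong[OF assms(1) Suc.IH[of "\<lambda>x. frechet_derivative f (at x) (axis i 1)"
          "\<lambda>x. frechet_derivative g (at x) (axis i 1)"]] Suc.prems by simp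
  then show ?case using Suc.prems by (simp add: differentiable_on_add)
qed

lemma Ck_mult:
  assumes "open S" and "f \<in> Ck k S" and "g \<in> Ck k S"
  shows "(\<lambda>x. f x * g x) \<in> Ck k S"
  using assms(2,3)
proof (induction k arbitrary: f g)
  case 0
  then show ?case by (simp add: continuous_on_mult)
next
  case (Suc k)
  have "(\<lambda>x. frechet_derivative (\<lambda>x. f x * g x) (at x) (axis i 1)) \<in> Ck k S" for i
  proof -
    let ?df = "\<lambda>x. frechet_derivative f (at x) (axis i 1)"
    let ?dg = "\<lambda>x. frechet_derivative g (at x) (axis i 1)"
    have leibniz: "frechet_derivative (\<lambda>x. f x * g x) (at x) (axis i 1) = f x * ?dg x + ?df x * g x"
      if "x \<in> S" for x
      using frechet_derivative_at[OF has_derivative_mult[OF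
            Ck_Suc_has_derivative[OF assms(1) Suc.prems(1) that]
            Ck_Suc_has_derivative[OF assms(1) Suc.prems(2) that]], symmetric] by simp
    have "(\<lambda>x. f x * ?dg x + ?df x * g x) \<in> Ck k S"
      using Ck_add[OF assms(1) Suc.IH[of f ?dg] Suc.IH[of ?df g]]
        Ck_Suc_imp_Ck[OF Suc.prems(1)] Ck_Suc_imp_Ck[OF Suc.prems(2)] Suc.prems by simp
    then show ?thesis by (rule Ck_cong[OF assms(1)]) (rule leibniz)
  qed
  then show ?case using Suc.prems by (simp add: differentiable_on_mult)
qed

text \<open>A pointwise operation preserving each \<open>Ck k S\<close> (on open sets) preserves the smooth
  functions of a manifold, since the chart images are open.\<close>
lemma Cinf_pointwise:
  fixes A :: "('a::topological_space set \<times> ('a \<Rightarrow> real^'n)) set"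
  assumes "smooth_atlas A"
    and op: "\<And>(S :: (real^'n) set) k f g.
      open S \<Longrightarrow> f \<in> Ck k S \<Longrightarrow> g \<in> Ck k S \<Longrightarrow> (\<lambda>x. h (f x) (g x)) \<in> Ck k S"
    and "f \<in> Cinf A" and "g \<in> Cinf A"
  shows "(\<lambda>p. h (f p) (g p)) \<in> Cinf A"
proof -
  have "smooth_on (\<phi> ` U) ((\<lambda>p. h (f p) (g p)) \<circ> inv_into U \<phi>)" if "(U, \<phi>) \<in> A" for U \<phi>
  proof -
    have "open (\<phi> ` U)" using assms(1) that unfolding smooth_atlas_def by blast
    moreover have "f \<circ> inv_into U \<phi> \<in> Ck k (\<phi> ` U)" "g \<circ> inv_into U \<phi> \<in> Ck k (\<phi> ` U)" for k
      using assms(3,4) that unfolding Cinf_def smooth_on_def by auto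
    ultimately have "(\<lambda>x. h ((f \<circ> inv_into U \<phi>) x) ((g \<circ> inv_into U \<phi>) x)) \<in> Ck k (\<phi> ` U)" for k
      by (rule op)
    then show ?thesis unfolding smooth_on_def by (simp add: o_def)
  qed
  then show ?thesis unfolding Cinf_def by blast
qed

lemma Cinf_const: "(\<lambda>_. c) \<in> Cinf A"
  by (simp add: Cinf_def smooth_on_def o_def Ck_const)

lemma Cinf_add: "smooth_atlas A \<Longrightarrow> f \<in> Cinf A \<Longrightarrow> g \<in> Cinf A \<Longrightarrow> (\<lambda>p. f p + g p) \<in> Cinf A"
  by (rule Cinf_pointwise[where h = "(+)"]) (auto intro: Ck_add)

lemma Cinf_mult: "smooth_atlas A \<Longrightarrow> f \<in> Cinf A \<Longrightarrow> g \<in> Cinf A \<Longrightarrow> (\<lambda>p. f p * g p) \<in> Cinf A"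
  by (rule Cinf_pointwise[where h = "(*)"]) (auto intro: Ck_mult)

lemma Cinf_cmult: "smooth_atlas A \<Longrightarrow> f \<in> Cinf A \<Longrightarrow> (\<lambda>p. c * f p) \<in> Cinf A"
  using Cinf_mult[OF _ Cinf_const] by blast

lemma Cinf_diff: "smooth_atlas A \<Longrightarrow> f \<in> Cinf A \<Longrightarrow> g \<in> Cinf A \<Longrightarrow> (\<lambda>p. f p - g p) \<in> Cinf A"
  using Cinf_add[of A f "\<lambda>p. (-1) * g p"] Cinf_cmult[of A g "-1"] by simp

section \<open>Vector fields are closed under the linear operations and the bracket\<close>

text \<open>Vector fields are the derivations of \<open>C^\<infinity>(M)\<close> (vanishing on non-smooth functions);
  the F-manifold axioms only apply to such derivations, so every vector field built in the
  argument (sums, multiples, brackets, Lie derivatives) must be shown to be one.\<close>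
lemma vector_fieldsI:
  assumes "\<And>f. f \<notin> Cinf A \<Longrightarrow> X f = (\<lambda>_. 0)"
    and "\<And>f. f \<in> Cinf A \<Longrightarrow> X f \<in> Cinf A"
    and "\<And>c f. f \<in> Cinf A \<Longrightarrow> X (\<lambda>p. c * f p) = (\<lambda>p. c * X f p)"
    and "\<And>f g. f \<in> Cinf A \<Longrightarrow> g \<in> Cinf A \<Longrightarrow> X (\<lambda>p. f p + g p) = (\<lambda>p. X f p + X g p)"
    and "\<And>f g. f \<in> Cinf A \<Longrightarrow> g \<in> Cinf A \<Longrightarrow> X (\<lambda>p. f p * g p) = (\<lambda>p. f p * X g p + g p * X f p)"
  shows "X \<in> vector_fields A"
  using assms unfolding vector_fields_def by blast

lemma
  assumes "X \<in> vector_fields A"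
  shows vf_nonsmooth: "f \<notin> Cinf A \<Longrightarrow> X f = (\<lambda>_. 0)"
    and vf_smooth: "f \<in> Cinf A \<Longrightarrow> X f \<in> Cinf A"
    and vf_scale: "f \<in> Cinf A \<Longrightarrow> X (\<lambda>p. c * f p) = (\<lambda>p. c * X f p)"
    and vf_additive: "f \<in> Cinf A \<Longrightarrow> g \<in> Cinf A \<Longrightarrow> X (\<lambda>p. f p + g p) = (\<lambda>p. X f p + X g p)"
    and vf_leibniz: "f \<in> Cinf A \<Longrightarrow> g \<in> Cinf A \<Longrightarrow> X (\<lambda>p. f p * g p) = (\<lambda>p. f p * X g p + g p * X f p)"
  using assms unfolding vector_fields_def by blast+

lemma vf_const_zero: "X \<in> vector_fields A \<Longrightarrow> X (\<lambda>_. 0) = (\<lambda>_. 0)"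
  using vf_scale[of X A "\<lambda>_. 0" 0] Cinf_const[of 0 A] by simp

definition vf_zero :: "'a vf" where
  "vf_zero = (\<lambda>_ _. 0)"

lemma vf_zero_closed: "vf_zero \<in> vector_fields A"
  by (rule vector_fieldsI) (simp_all add: vf_zero_def Cinf_const)

lemma vf_add_closed:
  assumes "smooth_atlas A" and X: "X \<in> vector_fields A" and Y: "Y \<in> vector_fields A"
  shows "vf_add X Y \<in> vector_fields A"
proof (rule vector_fieldsI)
  fix f g :: "'a \<Rightarrow> real" and c :: real
  show "f \<notin> Cinf A \<Longrightarrow> vf_add X Y f = (\<lambda>_. 0)"
    using vf_nonsmooth[OF X] vf_nonsmooth[OF Y] by (simp add: vf_add_def)
  show "f \<in> Cinf A \<Longrightarrow> vf_add X Y f \<in> Cinf A"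
    using Cinf_add[OF assms(1) vf_smooth[OF X] vf_smooth[OF Y]] by (simp add: vf_add_def)
  show "f \<in> Cinf A \<Longrightarrow> vf_add X Y (\<lambda>p. c * f p) = (\<lambda>p. c * vf_add X Y f p)"
    using vf_scale[OF X] vf_scale[OF Y] by (simp add: vf_add_def distrib_left)
  show "f \<in> Cinf A \<Longrightarrow> g \<in> Cinf A \<Longrightarrow>
      vf_add X Y (\<lambda>p. f p + g p) = (\<lambda>p. vf_add X Y f p + vf_add X Y g p)"
    using vf_additive[OF X] vf_additive[OF Y] by (simp add: vf_add_def add_ac)
  show "f \<in> Cinf A \<Longrightarrow> g \<in> Cinf A \<Longrightarrow>
      vf_add X Y (\<lambda>p. f p * g p) = (\<lambda>p. f p * vf_add X Y g p + g p * vf_add X Y f p)"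
    using vf_leibniz[OF X] vf_leibniz[OF Y] by (simp add: vf_add_def algebra_simps)
qed

lemma vf_rscale_closed:
  assumes "smooth_atlas A" and X: "X \<in> vector_fields A"
  shows "vf_rscale c X \<in> vector_fields A"
proof (rule vector_fieldsI)
  fix f g :: "'a \<Rightarrow> real" and d :: real
  show "f \<notin> Cinf A \<Longrightarrow> vf_rscale c X f = (\<lambda>_. 0)"
    using vf_nonsmooth[OF X] by (simp add: vf_rscale_def)
  show "f \<in> Cinf A \<Longrightarrow> vf_rscale c X f \<in> Cinf A"
    using Cinf_cmult[OF assms(1) vf_smooth[OF X]] by (simp add: vf_rscale_def)
  show "f \<in> Cinf A \<Longrightarrow> vf_rscale c X (\<lambda>p. d * f p) = (\<lambda>p. d * vf_rscale c X f p)"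
    using vf_scale[OF X] by (simp add: vf_rscale_def mult.left_commute)
  show "f \<in> Cinf A \<Longrightarrow> g \<in> Cinf A \<Longrightarrow>
      vf_rscale c X (\<lambda>p. f p + g p) = (\<lambda>p. vf_rscale c X f p + vf_rscale c X g p)"
    using vf_additive[OF X] by (simp add: vf_rscale_def distrib_left)
  show "f \<in> Cinf A \<Longrightarrow> g \<in> Cinf A \<Longrightarrow>
      vf_rscale c X (\<lambda>p. f p * g p) = (\<lambda>p. f p * vf_rscale c X g p + g p * vf_rscale c X f p)"
    using vf_leibniz[OF X] by (simp add: vf_rscale_def algebra_simps)
qed

lemma vf_diff_as_add: "vf_diff X Y = vf_add X (vf_rscale (-1) Y)"
  by (simp add: vf_diff_def vf_add_def vf_rscale_def)

lemma vf_diff_closed: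
  "smooth_atlas A \<Longrightarrow> X \<in> vector_fields A \<Longrightarrow> Y \<in> vector_fields A \<Longrightarrow> vf_diff X Y \<in> vector_fields A"
  by (simp add: vf_diff_as_add vf_add_closed vf_rscale_closed)

lemma vf_bracket_closed:
  assumes A: "smooth_atlas A" and X: "X \<in> vector_fields A" and Y: "Y \<in> vector_fields A"
  shows "vf_bracket X Y \<in> vector_fields A"
proof (rule vector_fieldsI)
  fix f g :: "'a \<Rightarrow> real" and c :: real
  show "f \<notin> Cinf A \<Longrightarrow> vf_bracket X Y f = (\<lambda>_. 0)"
    using vf_nonsmooth[OF X] vf_nonsmooth[OF Y] vf_const_zero[OF X] vf_const_zero[OF Y]
    by (simp add: vf_bracket_def)
  show "f \<in> Cinf A \<Longrightarrow> vf_bracket X Y f \<in> Cinf A"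
    using Cinf_diff[OF A vf_smooth[OF X vf_smooth[OF Y]] vf_smooth[OF Y vf_smooth[OF X]]]
    by (simp add: vf_bracket_def)
  show "f \<in> Cinf A \<Longrightarrow> vf_bracket X Y (\<lambda>p. c * f p) = (\<lambda>p. c * vf_bracket X Y f p)"
    using vf_scale[OF X] vf_scale[OF Y] vf_smooth[OF X] vf_smooth[OF Y]
    by (simp add: vf_bracket_def right_diff_distrib)
next
  fix f g :: "'a \<Rightarrow> real"
  assume f: "f \<in> Cinf A" and g: "g \<in> Cinf A"
  have derivs: "X f \<in> Cinf A" "X g \<in> Cinf A" "Y f \<in> Cinf A" "Y g \<in> Cinf A"
    using vf_smooth[OF X] vf_smooth[OF Y] f g by auto
  show "vf_bracket X Y (\<lambda>p. f p + g p) = (\<lambda>p. vf_bracket X Y f p + vf_bracket X Y g p)"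
    unfolding vf_bracket_def vf_additive[OF X f g] vf_additive[OF Y f g]
      vf_additive[OF X derivs(3,4)] vf_additive[OF Y derivs(1,2)] by (simp add: fun_eq_iff)
  text \<open>The second-order terms \<open>X f \<cdot> Y g\<close> cancel in the commutator.\<close>
  have "X (Y (\<lambda>p. f p * g p)) =
      (\<lambda>p. (f p * X (Y g) p + Y g p * X f p) + (g p * X (Y f) p + Y f p * X g p))"
    using vf_leibniz[OF Y f g]
      vf_additive[OF X Cinf_mult[OF A f derivs(4)] Cinf_mult[OF A g derivs(3)]]
      vf_leibniz[OF X f derivs(4)] vf_leibniz[OF X g derivs(3)] by simp
  moreover have "Y (X (\<lambda>p. f p * g p)) =
      (\<lambda>p. (f p * Y (X g) p + X g p * Y f p) + (g p * Y (X f) p + X f p * Y g p))"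
    using vf_leibniz[OF X f g]
      vf_additive[OF Y Cinf_mult[OF A f derivs(2)] Cinf_mult[OF A g derivs(1)]]
      vf_leibniz[OF Y f derivs(2)] vf_leibniz[OF Y g derivs(1)] by simp
  ultimately show "vf_bracket X Y (\<lambda>p. f p * g p) =
      (\<lambda>p. f p * vf_bracket X Y g p + g p * vf_bracket X Y f p)"
    unfolding vf_bracket_def by (simp add: fun_eq_iff right_diff_distrib)
qed

lemma lie_mult_closed:
  assumes "smooth_atlas A"
    and "\<And>X Y. X \<in> vector_fields A \<Longrightarrow> Y \<in> vector_fields A \<Longrightarrow> mul X Y \<in> vector_fields A"
    and "Z \<in> vector_fields A" "X \<in> vector_fields A" "Y \<in> vector_fields A"
  shows "lie_mult mul Z X Y \<in> vector_fields A"
  unfolding lie_mult_def using assms by (simp add: vf_diff_closed vf_bracket_closed)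

lemma vf_bracket_antisym: "vf_bracket X Y = vf_rscale (-1) (vf_bracket Y X)"
  by (simp add: vf_bracket_def vf_rscale_def)

lemma vf_bracket_self: "vf_bracket X X = vf_zero"
  by (simp add: vf_bracket_def vf_zero_def)

lemma vf_rscale_zero: "vf_rscale 0 X = vf_zero"
  by (simp add: vf_rscale_def vf_zero_def)

lemma vf_rscale_one: "vf_rscale 1 X = X"
  by (simp add: vf_rscale_def)

lemma vf_diff_eq_zero_iff: "vf_diff X Y = vf_zero \<longleftrightarrow> X = Y"
  by (auto simp: vf_diff_def vf_zero_def fun_eq_iff)

lemma vf_add_self_eq: "vf_add Q Q = Q \<Longrightarrow> Q = vf_zero"
  by (auto simp: vf_add_def vf_zero_def fun_eq_iff)

lemma vf_bracket_mul:
  "vf_bracket Z (mul X Y) =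
     vf_add (vf_add (lie_mult mul Z X Y) (mul (vf_bracket Z X) Y)) (mul X (vf_bracket Z Y))"
  by (simp add: lie_mult_def vf_add_def vf_diff_def)

section \<open>F-manifolds\<close>

locale fmanifold =
  fixes A :: "('a::topological_space set \<times> ('a \<Rightarrow> real^'n)) set"
    and mul :: "'a vf \<Rightarrow> 'a vf \<Rightarrow> 'a vf"
    and e :: "'a vf"
  assumes F_manifold: "F_manifold A mul e"
begin

abbreviation V :: "'a vf set" where
  "V \<equiv> vector_fields A"

lemma atlas: "smooth_atlas A"
  and mul_closed: "X \<in> V \<Longrightarrow> Y \<in> V \<Longrightarrow> mul X Y \<in> V"
  and mul_comm: "X \<in> V \<Longrightarrow> Y \<in> V \<Longrightarrow> mul X Y = mul Y X"
  and mul_assoc: "X \<in> V \<Longrightarrow> Y \<in> V \<Longrightarrow> Z \<in> V \<Longrightarrow> mul (mul X Y) Z = mul X (mul Y Z)"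
  and mul_add_left:
    "X \<in> V \<Longrightarrow> Y \<in> V \<Longrightarrow> Z \<in> V \<Longrightarrow> mul (vf_add X Y) Z = vf_add (mul X Z) (mul Y Z)"
  and mul_fscale_left:
    "g \<in> Cinf A \<Longrightarrow> X \<in> V \<Longrightarrow> Y \<in> V \<Longrightarrow> mul (vf_fscale g X) Y = vf_fscale g (mul X Y)"
  and unit_closed: "e \<in> V"
  and mul_unit_left: "X \<in> V \<Longrightarrow> mul e X = X"
  and lie_mult_leibniz: "X \<in> V \<Longrightarrow> Y \<in> V \<Longrightarrow> Z \<in> V \<Longrightarrow> W \<in> V \<Longrightarrow>
        lie_mult mul (mul X Y) Z W = vf_add (mul X (lie_mult mul Y Z W)) (mul Y (lie_mult mul X Z W))"
  using F_manifold unfolding F_manifold_def by blast+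

lemma bracket_closed: "X \<in> V \<Longrightarrow> Y \<in> V \<Longrightarrow> vf_bracket X Y \<in> V"
  using vf_bracket_closed[OF atlas] .

lemma lie_closed: "Z \<in> V \<Longrightarrow> X \<in> V \<Longrightarrow> Y \<in> V \<Longrightarrow> lie_mult mul Z X Y \<in> V"
  using lie_mult_closed[OF atlas mul_closed] .

lemma mul_unit_right: "X \<in> V \<Longrightarrow> mul X e = X"
  using mul_comm[OF _ unit_closed] mul_unit_left by simp

lemma mul_left_commute: "X \<in> V \<Longrightarrow> Y \<in> V \<Longrightarrow> Z \<in> V \<Longrightarrow> mul X (mul Y Z) = mul Y (mul X Z)"
  by (metis mul_assoc mul_comm)

text \<open>Real scalars are constant functions, so \<open>C^\<infinity>\<close>-bilinearity covers them.\<close>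
lemma mul_rscale_left: "X \<in> V \<Longrightarrow> Y \<in> V \<Longrightarrow> mul (vf_rscale c X) Y = vf_rscale c (mul X Y)"
  using mul_fscale_left[OF Cinf_const, of X Y c] by (simp add: vf_rscale_def vf_fscale_def)

lemma mul_rscale_right: "X \<in> V \<Longrightarrow> Y \<in> V \<Longrightarrow> mul X (vf_rscale c Y) = vf_rscale c (mul X Y)"
  by (metis mul_comm mul_rscale_left vf_rscale_closed[OF atlas])

lemma mul_add_right:
  "X \<in> V \<Longrightarrow> Y \<in> V \<Longrightarrow> Z \<in> V \<Longrightarrow> mul X (vf_add Y Z) = vf_add (mul X Y) (mul X Z)"
  by (metis mul_comm mul_add_left vf_add_closed[OF atlas])

lemma mul_diff_right:
  "X \<in> V \<Longrightarrow> Y \<in> V \<Longrightarrow> Z \<in> V \<Longrightarrow> mul X (vf_diff Y Z) = vf_diff (mul X Y) (mul X Z)"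
  by (simp add: vf_diff_as_add mul_add_right mul_rscale_right vf_rscale_closed[OF atlas])

lemma mul_diff_rscale_right:
  "X \<in> V \<Longrightarrow> Y \<in> V \<Longrightarrow> W \<in> V \<Longrightarrow>
    mul X (vf_diff Y (vf_rscale c W)) = vf_diff (mul X Y) (vf_rscale c (mul X W))"
  by (simp add: mul_diff_right mul_rscale_right vf_rscale_closed[OF atlas])

lemma funpow_closed: "X \<in> V \<Longrightarrow> (mul X ^^ n) e \<in> V"
  by (induction n) (simp_all add: unit_closed mul_closed)

lemma mul_zero_right: "X \<in> V \<Longrightarrow> mul X vf_zero = vf_zero"
  using mul_rscale_right[OF _ vf_zero_closed, of X 0] by (simp add: vf_rscale_zero)

text \<open>The unit field is parallel for the multiplication: \<open>L_e(\<circ>) = 0\<close>. Indeed the defining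
  identity with \<open>X = Y = e\<close> gives \<open>L_e = 2 L_e\<close>.\<close>
lemma lie_mult_unit: "X \<in> V \<Longrightarrow> Y \<in> V \<Longrightarrow> lie_mult mul e X Y = vf_zero"
  using lie_mult_leibniz[OF unit_closed unit_closed, of X Y]
  by (simp add: mul_unit_left unit_closed lie_closed vf_add_self_eq)

end

section \<open>Integer powers of an invertible vector field\<close>

locale fmanifold_invertible = fmanifold +
  fixes E :: "'a vf"
  assumes invertible: "vf_invertible A mul e E"
begin

abbreviation Einv :: "'a vf" where
  "Einv \<equiv> vf_inverse A mul e E"

abbreviation pw :: "int \<Rightarrow> 'a vf" where
  "pw k \<equiv> vf_ipow A mul e E k"

lemma E_closed: "E \<in> V"
  and Einv_closed: "Einv \<in> V"
  and mul_E_Einv: "mul E Einv = e"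
proof -
  have "E \<in> V" and "\<exists>F. F \<in> V \<and> mul E F = e"
    using invertible unfolding vf_invertible_def by auto
  then show "E \<in> V" "Einv \<in> V" "mul E Einv = e"
    unfolding vf_inverse_def by (metis (mono_tags, lifting) someI_ex)+
qed

lemma mul_E_cancel:
  assumes "X \<in> V" and "Y \<in> V" and "mul E X = mul E Y"
  shows "X = Y"
proof -
  have "mul Einv (mul E Z) = Z" if "Z \<in> V" for Z
  proof -
    have "mul Einv (mul E Z) = mul (mul E Einv) Z"
      using mul_assoc[OF Einv_closed E_closed that] mul_comm[OF Einv_closed E_closed] by simp
    then show ?thesis using that by (simp add: mul_E_Einv mul_unit_left)
  qed
  then show ?thesis using assms by metis
qed

lemma pw_closed: "pw k \<in> V"
  unfolding vf_ipow_def using funpow_closed E_closed Einv_closed by simp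

lemma pw_0: "pw 0 = e"
  by (simp add: vf_ipow_def)

text \<open>Multiplication by \<open>E\<close> shifts the exponent; for negative exponents this uses \<open>E \<circ> E^{-1} = e\<close>.\<close>
lemma pw_succ: "pw (k + 1) = mul E (pw k)"
proof (cases "k \<ge> 0")
  case True
  then have "nat (k + 1) = Suc (nat k)" by simp
  with True show ?thesis by (simp add: vf_ipow_def)
next
  case False
  define n where "n = nat (- k) - 1"
  have k: "k = - int (Suc n)" using False unfolding n_def by simp
  define Q where "Q = (mul Einv ^^ n) e"
  have Q: "Q \<in> V" unfolding Q_def using funpow_closed[OF Einv_closed] .
  have "pw (k + 1) = Q" and "pw k = mul Einv Q"
    unfolding Q_def k vf_ipow_def by (simp_all add: nat_add_distrib)
  moreover have "mul E (mul Einv Q) = Q"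
    using mul_assoc[OF E_closed Einv_closed Q] by (simp add: mul_E_Einv mul_unit_left Q)
  ultimately show ?thesis by simp
qed

lemma mul_E_pw: "X \<in> V \<Longrightarrow> mul E (mul (pw k) X) = mul (pw (k + 1)) X"
  by (simp add: pw_succ mul_assoc E_closed pw_closed)

text \<open>Exponents add; the downward induction step cancels a factor \<open>E\<close>.\<close>
lemma pw_add: "mul (pw a) (pw b) = pw (a + b)"
proof (induction b rule: int_induct[where k = 0])
  case base
  then show ?case by (simp add: pw_0 mul_unit_right pw_closed)
next
  case (step1 i)
  have "mul (pw a) (pw (i + 1)) = mul E (mul (pw a) (pw i))"
    by (simp add: pw_succ mul_left_commute E_closed pw_closed)
  also have "\<dots> = pw (a + i + 1)"
    by (simp add: step1.IH pw_succ)
  finally show ?case by (simp add: add.assoc)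
next
  case (step2 i)
  have "mul E (mul (pw a) (pw (i - 1))) = mul (pw a) (pw i)"
    using mul_left_commute[OF E_closed pw_closed pw_closed] pw_succ[of "i - 1"] by simp
  also have "\<dots> = mul E (pw (a + (i - 1)))"
    using step2.IH pw_succ[of "a + (i - 1)"] by simp
  finally show ?case by (rule mul_E_cancel[OF mul_closed[OF pw_closed pw_closed] pw_closed])
qed

lemma mul_pw_pw: "X \<in> V \<Longrightarrow> mul (pw a) (mul (pw b) X) = mul (pw (a + b)) X"
  using mul_assoc[OF pw_closed pw_closed, of X a b] by (simp add: pw_add)

text \<open>The vanishing principle behind all inductions over the integers below: a sequence of
  vector fields with \<open>D (k+1) = E \<circ> D k\<close> vanishes identically once it vanishes at \<open>0\<close>,
  because multiplication by \<open>E\<close> is injective.\<close>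
lemma orbit_vanishes:
  fixes D :: "int \<Rightarrow> 'a vf"
  assumes closed: "\<And>k. D k \<in> V" and "D 0 = vf_zero" and step: "\<And>k. D (k + 1) = mul E (D k)"
  shows "D k = vf_zero"
proof (induction k rule: int_induct[where k = 0])
  case base
  then show ?case by fact
next
  case (step1 i)
  then show ?case by (simp add: step mul_zero_right E_closed)
next
  case (step2 i)
  have "mul E (D (i - 1)) = D i"
    using step[of "i - 1"] by simp
  also have "\<dots> = mul E vf_zero"
    by (simp add: step2.IH mul_zero_right E_closed)
  finally show ?case by (rule mul_E_cancel[OF closed vf_zero_closed])
qed

text \<open>If \<open>L_E(\<circ>)(X,Y) = R\<close>, then the Leibniz identity \<open>L_{E \<circ> E^k} = E \<circ> L_{E^k} + E^k \<circ> L_E\<close>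
  yields \<open>L_{E^k}(\<circ>)(X,Y) = k E^{k-1} \<circ> R\<close> for all integers \<open>k\<close>.\<close>
lemma lie_mult_pw:
  assumes X: "X \<in> V" and Y: "Y \<in> V" and R: "R \<in> V" and lie_E: "lie_mult mul E X Y = R"
  shows "lie_mult mul (pw k) X Y = vf_rscale (of_int k) (mul (pw (k - 1)) R)"
proof -
  define D where
    "D k = vf_diff (lie_mult mul (pw k) X Y) (vf_rscale (of_int k) (mul (pw (k - 1)) R))" for k
  have "D k = vf_zero"
  proof (rule orbit_vanishes)
    show "D k \<in> V" for k
      unfolding D_def using X Y R
      by (simp add: vf_diff_closed vf_rscale_closed atlas lie_closed mul_closed pw_closed)
    show "D 0 = vf_zero"
      unfolding D_def using X Y by (simp add: pw_0 lie_mult_unit vf_rscale_zero vf_diff_eq_zero_iff)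
    show "D (k + 1) = mul E (D k)" for k
    proof -
      have lie_succ: "lie_mult mul (pw (k + 1)) X Y =
          vf_add (mul E (lie_mult mul (pw k) X Y)) (mul (pw k) R)"
        using lie_mult_leibniz[OF E_closed pw_closed X Y] by (simp add: pw_succ lie_E)
      have "mul E (mul (pw (k - 1)) R) = mul (pw k) R"
        using mul_E_pw[OF R, of "k - 1"] by simp
      then have "mul E (D k) =
          vf_diff (mul E (lie_mult mul (pw k) X Y)) (vf_rscale (of_int k) (mul (pw k) R))"
        unfolding D_def using X Y R
        by (simp add: mul_diff_rscale_right E_closed lie_closed pw_closed mul_closed)
      then show ?thesis
        unfolding D_def lie_succ by (simp add: vf_diff_def vf_add_def vf_rscale_def algebra_simps)
    qed
  qed
  then show ?thesis unfolding D_def vf_diff_eq_zero_iff .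
qed

text \<open>A linear recursion for \<open>[Z, E^m]\<close>: the product rule \<open>[Z, E \<circ> E^m] = L_Z(E, E^m) +
  [Z,E] \<circ> E^m + E \<circ> [Z, E^m]\<close> determines all brackets \<open>[Z, E^m]\<close> from \<open>[Z, e]\<close>, \<open>[Z, E]\<close>
  and the Lie derivative \<open>L_Z\<close>, when these are all multiples of powers of \<open>E\<close> times a fixed \<open>H\<close>.\<close>
lemma bracket_pw:
  assumes Z: "Z \<in> V" and H: "H \<in> V"
    and lie_Z: "\<And>k. lie_mult mul Z E (pw k) = vf_rscale (of_int p) (mul (pw (k + r)) H)"
    and bracket_E: "vf_bracket Z E = vf_rscale (of_int q) (mul (pw r) H)"
    and bracket_unit: "vf_bracket Z e = vf_rscale (of_int b) (mul (pw (r - 1)) H)"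
  shows "vf_bracket Z (pw m) = vf_rscale (of_int (b + m * (p + q))) (mul (pw (m + r - 1)) H)"
proof -
  define D where
    "D m = vf_diff (vf_bracket Z (pw m))
       (vf_rscale (of_int (b + m * (p + q))) (mul (pw (m + r - 1)) H))" for m
  have "D m = vf_zero"
  proof (rule orbit_vanishes)
    show "D m \<in> V" for m
      unfolding D_def using Z H
      by (simp add: vf_diff_closed vf_rscale_closed atlas bracket_closed mul_closed pw_closed)
    show "D 0 = vf_zero"
      unfolding D_def by (simp add: pw_0 bracket_unit vf_diff_eq_zero_iff)
    show "D (m + 1) = mul E (D m)" for m
    proof -
      have "mul (vf_bracket Z E) (pw m) = vf_rscale (of_int q) (mul (pw (m + r)) H)"
        using mul_comm[OF mul_closed[OF pw_closed H] pw_closed] mul_pw_pw[OF H, of m r]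
        by (simp add: bracket_E mul_rscale_left pw_closed H mul_closed)
      then have bracket_succ: "vf_bracket Z (pw (m + 1)) =
          vf_add (vf_add (vf_rscale (of_int p) (mul (pw (m + r)) H))
            (vf_rscale (of_int q) (mul (pw (m + r)) H))) (mul E (vf_bracket Z (pw m)))"
        using vf_bracket_mul[of Z mul E "pw m"] by (simp add: pw_succ lie_Z)
      have "mul E (mul (pw (m + r - 1)) H) = mul (pw (m + r)) H"
        using mul_E_pw[OF H, of "m + r - 1"] by simp
      then have "mul E (D m) = vf_diff (mul E (vf_bracket Z (pw m)))
          (vf_rscale (of_int (b + m * (p + q))) (mul (pw (m + r)) H))"
        unfolding D_def using Z H
        by (simp add: mul_diff_rscale_right E_closed bracket_closed pw_closed mul_closed)
      moreover have "m + 1 + r - 1 = m + r" by simp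
      ultimately show ?thesis
        unfolding D_def bracket_succ by (simp add: vf_diff_def vf_add_def vf_rscale_def algebra_simps)
    qed
  qed
  then show ?thesis unfolding D_def vf_diff_eq_zero_iff .
qed

end

section \<open>Eventual identities\<close>

locale fmanifold_eventual_identity = fmanifold_invertible +
  assumes twisted_F_manifold: "F_manifold A (\<lambda>X Y. mul (mul X Y) (vf_inverse A mul e E)) E"

context fmanifold_eventual_identity
begin

abbreviation G :: "'a vf" where
  "G \<equiv> vf_bracket e E"

lemma G_closed: "G \<in> V"
  by (rule bracket_closed[OF unit_closed E_closed])

text \<open>Since \<open>E\<close> is the unit of \<open>*\<close>, it is parallel for \<open>*\<close>: \<open>[E, -]\<close> is a derivation of \<open>*\<close>.\<close>
lemma bracket_E_twisted_derivation:
  assumes "X \<in> V" and "W \<in> V"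
  shows "vf_bracket E (mul (mul X W) Einv) =
    vf_add (mul (mul (vf_bracket E X) W) Einv) (mul (mul X (vf_bracket E W)) Einv)"
proof -
  interpret twisted: fmanifold A "\<lambda>X Y. mul (mul X Y) Einv" E
    by (rule fmanifold.intro) (rule twisted_F_manifold)
  show ?thesis
    using twisted.lie_mult_unit[OF assms]
    by (simp add: lie_mult_def vf_diff_def vf_add_def vf_zero_def fun_eq_iff diff_eq_eq add.commute)
qed

lemma lie_mult_E:
  assumes X: "X \<in> V" and Y: "Y \<in> V"
  shows "lie_mult mul E X Y = mul (mul G X) Y"
proof -
  let ?W = "mul Y E"
  define K where "K = mul (vf_bracket E ?W) Einv"
  have W: "?W \<in> V" and K: "K \<in> V"
    unfolding K_def using Y by (simp_all add: mul_closed bracket_closed E_closed Einv_closed)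
  have untwist: "mul (mul U ?W) Einv = mul U Y" if "U \<in> V" for U
    using that Y by (simp add: mul_assoc mul_closed E_closed Einv_closed mul_E_Einv mul_unit_right)
  text \<open>\<open>[E,-]\<close> differentiates \<open>U \<circ> Y = U * W\<close> with \<open>W = Y \<circ> E\<close>:\<close>
  have product_rule: "vf_bracket E (mul U Y) = vf_add (mul (vf_bracket E U) Y) (mul U K)"
    if "U \<in> V" for U
  proof -
    have "mul (mul U (vf_bracket E ?W)) Einv = mul U K"
      unfolding K_def using mul_assoc[OF that bracket_closed[OF E_closed W] Einv_closed] .
    then show ?thesis
      using bracket_E_twisted_derivation[OF that W] untwist[OF that]
        untwist[OF bracket_closed[OF E_closed that]] by simp
  qed
  text \<open>Taking \<open>U = e\<close> identifies \<open>K = [E,Y] + G \<circ> Y\<close>.\<close>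
  have "mul (vf_bracket E e) Y = vf_rscale (-1) (mul G Y)"
    using mul_rscale_left[OF G_closed Y] vf_bracket_antisym[of E e] by simp
  then have K_eq: "K = vf_add (vf_bracket E Y) (mul G Y)"
    using product_rule[OF unit_closed] K Y
    by (simp add: mul_unit_left fun_eq_iff vf_add_def vf_rscale_def)
  have "mul X K = vf_add (mul X (vf_bracket E Y)) (mul (mul G X) Y)"
    unfolding K_eq using X Y G_closed
    by (simp add: mul_add_right bracket_closed E_closed mul_closed mul_left_commute mul_assoc
        mul_comm[of X G])
  then show ?thesis
    using product_rule[OF X] by (simp add: lie_mult_def vf_diff_def vf_add_def fun_eq_iff)
qed

lemma lie_mult_pw_E:
  "X \<in> V \<Longrightarrow> Y \<in> V \<Longrightarrow>
    lie_mult mul (pw k) X Y = vf_rscale (of_int k) (mul (pw (k - 1)) (mul (mul G X) Y))"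
  by (rule lie_mult_pw) (simp_all add: lie_mult_E mul_closed G_closed)

text \<open>Index bookkeeping for \<open>G \<circ> E \<circ> E^k\<close>, which appears in \<open>L_{E^n}(E, E^k)\<close>.\<close>
lemma mul_G_E_pw: "mul (mul G E) (pw k) = mul (pw (k + 1)) G"
proof -
  have "mul (mul G E) (pw k) = mul E (mul G (pw k))"
    using mul_comm[OF G_closed E_closed] mul_assoc[OF E_closed G_closed pw_closed] by simp
  also have "\<dots> = mul (pw (k + 1)) G"
    using mul_comm[OF G_closed pw_closed] mul_E_pw[OF G_closed] by simp
  finally show ?thesis .
qed

text \<open>The three instances of the recursion \<open>bracket_pw\<close>: \<open>Z = e\<close> (where \<open>L_e = 0\<close>),
  \<open>Z = E\<close>, and \<open>Z = E^n\<close>, each feeding the previous ones in through antisymmetry.\<close>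
lemma bracket_unit_pw: "vf_bracket e (pw m) = vf_rscale (of_int m) (mul (pw (m - 1)) G)"
  using bracket_pw[OF unit_closed G_closed, where p = 0 and r = 0 and q = 1 and b = 0]
  by (simp add: lie_mult_unit vf_rscale_zero vf_rscale_one vf_bracket_self pw_0 mul_unit_left
      G_closed unit_closed E_closed pw_closed)

lemma bracket_E_pw: "vf_bracket E (pw m) = vf_rscale (of_int (m - 1)) (mul (pw m) G)"
proof -
  have "vf_bracket E e = vf_rscale (of_int (-1)) (mul (pw (1 - 1)) G)"
    using vf_bracket_antisym[of E e] by (simp add: pw_0 mul_unit_left G_closed)
  moreover have "lie_mult mul E E (pw k) = vf_rscale (of_int 1) (mul (pw (k + 1)) G)" for k
    by (simp add: lie_mult_E mul_G_E_pw vf_rscale_one E_closed pw_closed)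
  ultimately show ?thesis
    using bracket_pw[OF E_closed G_closed, where p = 1 and r = 1 and q = 0 and b = "-1"]
    by (simp add: vf_bracket_self vf_rscale_zero algebra_simps)
qed

theorem bracket_pw_pw:
  "vf_bracket (pw n) (pw m) = vf_rscale (of_int (m - n)) (mul (pw (m + n - 1)) G)"
proof -
  have "lie_mult mul (pw n) E (pw k) = vf_rscale (of_int n) (mul (pw (k + n)) G)" for k
    using mul_pw_pw[OF G_closed, of "n - 1" "k + 1"]
    by (simp add: lie_mult_pw_E mul_G_E_pw E_closed pw_closed algebra_simps)
  moreover have "vf_bracket (pw n) E = vf_rscale (of_int (1 - n)) (mul (pw n) G)"
    using vf_bracket_antisym[of "pw n" E] by (simp add: bracket_E_pw vf_rscale_def algebra_simps)
  moreover have "vf_bracket (pw n) e = vf_rscale (of_int (- n)) (mul (pw (n - 1)) G)"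
    using vf_bracket_antisym[of "pw n" e] by (simp add: bracket_unit_pw vf_rscale_def)
  ultimately show ?thesis
    using bracket_pw[OF pw_closed G_closed, where p = n and r = n and q = "1 - n" and b = "- n"]
    by (simp add: algebra_simps)
qed

end

theorem mainTheorem6:
  fixes A :: "('a::{t2_space,second_countable_topology} set \<times> ('a \<Rightarrow> real^'n)) set"
    and mul :: "'a vf \<Rightarrow> 'a vf \<Rightarrow> 'a vf"
    and e E :: "'a vf"
    and m n :: int
  assumes "F_manifold A mul e"
    and "eventual_identity A mul e E"
  shows "vf_bracket (vf_ipow A mul e E n) (vf_ipow A mul e E m) =
         vf_rscale (of_int (m - n))
           (mul (vf_ipow A mul e E (m + n - 1)) (vf_bracket e E))"
proof -
  interpret fmanifold_eventual_identity A mul e E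
    using assms unfolding eventual_identity_def
    by (intro fmanifold_eventual_identity.intro fmanifold_invertible.intro fmanifold_eventual_identity_axioms.intro
        fmanifold_invertible_axioms.intro fmanifold.intro) auto
  show ?thesis by (rule bracket_pw_pw)
qed

end
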